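(* Let $\mathcal{X}\subset\mathbb{R}^d$ be finite, $x_1,x_2\in\mathcal{X}$, $\rho=|x_1-x_2|$, $c=(x_1+x_2)/2$. If the edge $e=\{x_1,x_2\}$ is critical in the Vietoris–Rips filtration generated by $\mathcal{X}$, then no point of $\mathcal{X}$ lies in the ball $B_{(1-\sqrt3/2)\rho}(c)$.
   Context: The Vietoris–Rips complex is $\mathcal{R}_r(\mathcal{X})=\{\mathcal{I}\subseteq\mathcal{X}:|y-z|\le r\ \forall y,z\in\mathcal{I}\}$ and $B_r(c)$ is the closed Euclidean ball. The edge $e$ enters the filtration at radius $\rho$; it is critical if its insertion (together with the cliques containing it) changes reduced homology, which is the case precisely when the link $\mathrm{lk}(e)$ of $e$ in $\mathcal{R}_\rho(\mathcal{X})$ is empty or has some nonzero reduced Betti number $\beta_{k-2}(\mathrm{lk}(e))$, $k\ge2$. Here the link of a simplex $\sigma$ in a complex $K$ is $\{\tau\in\mathrm{st}_K(\sigma):\tau\cap\sigma=\emptyset\}$, with $\mathrm{st}_K(\sigma)$ the smallest subcomplex containing all simplices containing $\sigma$. *)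

theory Defs
  imports "HOL-Analysis.Analysis"
begin

text \<open>Abstract simplicial complexes are represented as sets of (finite) vertex sets,
  closed under subsets; the empty simplex is included and plays the role of the
  (-1)-simplex, which yields the augmented (reduced) chain complex.\<close>

definition vietoris_rips :: "real \<Rightarrow> 'a::metric_space set \<Rightarrow> 'a set set" where
  "vietoris_rips r X = {I. I \<subseteq> X \<and> (\<forall>y\<in>I. \<forall>z\<in>I. dist y z \<le> r)}"

definition star :: "'a set set \<Rightarrow> 'a set \<Rightarrow> 'a set set" where
  "star K \<sigma> = {\<tau>. \<exists>\<upsilon>\<in>K. \<sigma> \<subseteq> \<upsilon> \<and> \<tau> \<subseteq> \<upsilon>}"

definition link :: "'a set set \<Rightarrow> 'a set \<Rightarrow> 'a set set" where
  "link K \<sigma> = {\<tau> \<in> star K \<sigma>. \<tau> \<inter> \<sigma> = {}}"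

text \<open>Simplicial chains with coefficients in the field Z/2: an n-vertex chain is a
  set of simplices with n vertices (addition = symmetric difference).\<close>
definition chains :: "'a set set \<Rightarrow> nat \<Rightarrow> 'a set set set" where
  "chains K n = Pow {\<sigma> \<in> K. card \<sigma> = n}"

text \<open>Boundary operator over Z/2 (the boundary of a vertex is the empty simplex:
  augmentation).\<close>
definition bdry :: "'a set set \<Rightarrow> 'a set set" where
  "bdry c = {\<tau>. odd (card {\<sigma> \<in> c. \<tau> \<subseteq> \<sigma> \<and> card \<sigma> = Suc (card \<tau>)})}"

definition cycles :: "'a set set \<Rightarrow> nat \<Rightarrow> 'a set set set" where
  "cycles K n = {c \<in> chains K n. bdry c = {}}"

definition boundaries :: "'a set set \<Rightarrow> nat \<Rightarrow> 'a set set set" where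
  "boundaries K n = bdry ` chains K (Suc n)"

text \<open>Dimension over Z/2 of a finite Z/2-vector space is log2 of its cardinality.
  Reduced Betti number in degree q (simplices with q+1 vertices):
  dim Z_q - dim B_q.\<close>
definition reduced_betti :: "'a set set \<Rightarrow> nat \<Rightarrow> real" where
  "reduced_betti K q = log 2 (card (cycles K (Suc q))) - log 2 (card (boundaries K (Suc q)))"

definition critical_edge :: "'a::metric_space set \<Rightarrow> 'a set \<Rightarrow> real \<Rightarrow> bool" where
  "critical_edge X e \<rho> \<longleftrightarrow>
     (let L = link (vietoris_rips \<rho> X) e in
       (\<forall>\<tau>\<in>L. \<tau> = {}) \<or> (\<exists>k::nat. k \<ge> 2 \<and> reduced_betti L (k - 2) \<noteq> 0))"

end

theory Submission
  imports Defs
begin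

text \<open>A point \<open>x\<close> of \<open>X\<close> within \<open>(1 - \<surd>3/2)\<rho>\<close> of the midpoint \<open>c\<close> of \<open>e\<close> is within \<open>\<rho>\<close>
  of every point lying within \<open>\<rho>\<close> of both endpoints, since such points lie within
  \<open>\<surd>3\<rho>/2\<close> of \<open>c\<close>. So adding \<open>x\<close> to a simplex of the link of \<open>e\<close> keeps it in the link:
  the link is a cone with apex \<open>x\<close>, hence nonempty and acyclic, and \<open>e\<close> is not critical.\<close>

definition cofaces :: "'a set set \<Rightarrow> 'a set \<Rightarrow> 'a set set" where
  "cofaces c \<tau> = {\<sigma>\<in>c. \<tau> \<subseteq> \<sigma> \<and> card \<sigma> = Suc (card \<tau>)}"

lemma mem_bdry_iff: "\<tau> \<in> bdry c \<longleftrightarrow> odd (card (cofaces c \<tau>))"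
  by (simp add: bdry_def cofaces_def)

lemma coface_if_mem_bdry:
  assumes "\<tau> \<in> bdry c"
  obtains \<sigma> where "\<sigma> \<in> c" "\<tau> \<subseteq> \<sigma>" "card \<sigma> = Suc (card \<tau>)"
proof -
  have "cofaces c \<tau> \<noteq> {}" using assms by (auto simp: mem_bdry_iff)
  then show thesis using that by (auto simp: cofaces_def)
qed

lemma card_intermediate_sets:
  assumes "finite s" "t \<subseteq> s" "card s = Suc (Suc (card t))"
  shows "card {r. t \<subseteq> r \<and> r \<subseteq> s \<and> card r = Suc (card t)} = 2"
proof -
  have ft: "finite t" using assms finite_subset by blast
  have "card (s - t) = 2" using assms ft by (simp add: card_Diff_subset)
  then obtain a b where ab: "s - t = {a, b}" "a \<noteq> b" by (meson card_2_iff)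
  have "{r. t \<subseteq> r \<and> r \<subseteq> s \<and> card r = Suc (card t)} = {insert a t, insert b t}"
  proof (intro equalityI subsetI)
    fix r assume r: "r \<in> {r. t \<subseteq> r \<and> r \<subseteq> s \<and> card r = Suc (card t)}"
    then have "card (r - t) = 1" using assms ft by (simp add: card_Diff_subset finite_subset)
    then obtain c where c: "r - t = {c}" by (meson card_1_singletonE)
    then have "c \<in> {a, b}" "r = insert c t" using r ab by blast+
    then show "r \<in> {insert a t, insert b t}" by blast
  next
    have "a \<notin> t" "b \<notin> t" "a \<in> s" "b \<in> s" using ab by auto
    moreover fix r assume "r \<in> {insert a t, insert b t}"
    ultimately show "r \<in> {r. t \<subseteq> r \<and> r \<subseteq> s \<and> card r = Suc (card t)}"
      using ft assms(2) by auto
  qed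
  moreover have "insert a t \<noteq> insert b t" using ab by blast
  ultimately show ?thesis by simp
qed

text \<open>Double counting: every coface of a coface of \<open>\<tau>\<close> in \<open>c\<close> contains exactly two
  intermediate faces, so the cofaces of \<open>\<tau>\<close> in \<open>bdry c\<close> are even in number.\<close>
lemma bdry_bdry:
  assumes "finite c" "\<forall>\<sigma>\<in>c. finite \<sigma>"
  shows "bdry (bdry c) = {}"
proof -
  have "\<tau> \<notin> bdry (bdry c)" for \<tau>
  proof -
    define R where "R = {\<rho>. \<tau> \<subseteq> \<rho> \<and> card \<rho> = Suc (card \<tau>) \<and> (\<exists>\<sigma>\<in>c. \<rho> \<subseteq> \<sigma>)}"
    have finR: "finite R"
      by (rule finite_subset[of _ "\<Union> (Pow ` c)"]) (use assms in \<open>auto simp: R_def\<close>)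
    have cofaces_bdry: "cofaces (bdry c) \<tau> = {\<rho>\<in>R. odd (card (cofaces c \<rho>))}"
    proof (intro equalityI subsetI)
      fix \<rho> assume "\<rho> \<in> cofaces (bdry c) \<tau>"
      then have \<rho>: "\<rho> \<in> bdry c" "\<tau> \<subseteq> \<rho>" "card \<rho> = Suc (card \<tau>)" by (auto simp: cofaces_def)
      from \<rho>(1) obtain \<sigma> where "\<sigma> \<in> c" "\<rho> \<subseteq> \<sigma>" by (rule coface_if_mem_bdry)
      with \<rho> show "\<rho> \<in> {\<rho>\<in>R. odd (card (cofaces c \<rho>))}" by (auto simp: R_def mem_bdry_iff)
    next
      fix \<rho> assume "\<rho> \<in> {\<rho>\<in>R. odd (card (cofaces c \<rho>))}"
      then show "\<rho> \<in> cofaces (bdry c) \<tau>" by (auto simp: R_def cofaces_def mem_bdry_iff)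
    qed
    have "(\<Sum>\<rho>\<in>R. card (cofaces c \<rho>)) = (\<Sum>\<rho>\<in>R. \<Sum>\<sigma>\<in>{\<sigma>\<in>c. \<rho> \<subseteq> \<sigma> \<and> card \<sigma> = Suc (card \<rho>)}. 1)"
      by (simp add: cofaces_def)
    also have "\<dots> = (\<Sum>\<sigma>\<in>c. \<Sum>\<rho>\<in>{\<rho>\<in>R. \<rho> \<subseteq> \<sigma> \<and> card \<sigma> = Suc (card \<rho>)}. 1)"
      by (rule sum.swap_restrict[OF finR assms(1)])
    also have "\<dots> = (\<Sum>\<sigma>\<in>c. card {\<rho>\<in>R. \<rho> \<subseteq> \<sigma> \<and> card \<sigma> = Suc (card \<rho>)})"
      by simp
    finally have sum_eq: "(\<Sum>\<rho>\<in>R. card (cofaces c \<rho>))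
        = (\<Sum>\<sigma>\<in>c. card {\<rho>\<in>R. \<rho> \<subseteq> \<sigma> \<and> card \<sigma> = Suc (card \<rho>)})" .
    have "even (card {\<rho>\<in>R. \<rho> \<subseteq> \<sigma> \<and> card \<sigma> = Suc (card \<rho>)})" if "\<sigma> \<in> c" for \<sigma>
    proof (cases "\<tau> \<subseteq> \<sigma> \<and> card \<sigma> = Suc (Suc (card \<tau>))")
      case True
      then have "{\<rho>\<in>R. \<rho> \<subseteq> \<sigma> \<and> card \<sigma> = Suc (card \<rho>)}
          = {r. \<tau> \<subseteq> r \<and> r \<subseteq> \<sigma> \<and> card r = Suc (card \<tau>)}"
        using that by (auto simp: R_def)
      moreover have "card {r. \<tau> \<subseteq> r \<and> r \<subseteq> \<sigma> \<and> card r = Suc (card \<tau>)} = 2"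
        by (rule card_intermediate_sets) (use True that assms(2) in auto)
      ultimately show ?thesis by simp
    next
      case False
      then have "{\<rho>\<in>R. \<rho> \<subseteq> \<sigma> \<and> card \<sigma> = Suc (card \<rho>)} = {}" by (auto simp: R_def)
      then show ?thesis by (simp only: card.empty even_zero)
    qed
    then have "even (\<Sum>\<rho>\<in>R. card (cofaces c \<rho>))" unfolding sum_eq by (simp add: dvd_sum)
    then have "even (card (cofaces (bdry c) \<tau>))" by (simp only: cofaces_bdry even_sum_iff[OF finR])
    then show ?thesis unfolding mem_bdry_iff by blast
  qed
  then show ?thesis by blast
qed

definition cone_chain :: "'a \<Rightarrow> 'a set set \<Rightarrow> 'a set set" where
  "cone_chain x z = insert x ` {\<sigma>\<in>z. x \<notin> \<sigma>}"

lemma cofaces_cone_chain_apex_notin: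
  assumes "\<forall>\<sigma>\<in>z. finite \<sigma>" "x \<notin> \<tau>"
  shows "cofaces (cone_chain x z) \<tau> = (if \<tau> \<in> z then {insert x \<tau>} else {})"
proof (intro equalityI subsetI)
  fix s assume "s \<in> cofaces (cone_chain x z) \<tau>"
  then obtain \<sigma> where s: "s = insert x \<sigma>" "\<sigma> \<in> z" "x \<notin> \<sigma>" "\<tau> \<subseteq> insert x \<sigma>"
    "card (insert x \<sigma>) = Suc (card \<tau>)" by (auto simp: cofaces_def cone_chain_def)
  have "finite \<sigma>" using s(2) assms(1) by blast
  moreover have "\<tau> \<subseteq> \<sigma>" using s(4) assms(2) by blast
  moreover have "card \<sigma> = card \<tau>" using s(3,5) \<open>finite \<sigma>\<close> by simp
  ultimately have "\<tau> = \<sigma>" by (simp add: card_subset_eq)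
  then show "s \<in> (if \<tau> \<in> z then {insert x \<tau>} else {})" using s by simp
next
  fix s assume "s \<in> (if \<tau> \<in> z then {insert x \<tau>} else {})"
  then show "s \<in> cofaces (cone_chain x z) \<tau>"
    using assms by (auto simp: cofaces_def cone_chain_def split: if_splits)
qed

lemma card_cofaces_cone_chain_apex_in:
  assumes "finite z" "\<forall>\<sigma>\<in>z. finite \<sigma>" "finite \<tau>" "x \<notin> \<tau>"
  shows "card (cofaces z \<tau>)
    = card (cofaces (cone_chain x z) (insert x \<tau>)) + (if insert x \<tau> \<in> z then 1 else 0)"
proof -
  define without_x where "without_x = {\<sigma>\<in>cofaces z \<tau>. x \<notin> \<sigma>}"
  have "cofaces (cone_chain x z) (insert x \<tau>) = insert x ` without_x"
  proof (intro equalityI subsetI)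
    fix s assume "s \<in> cofaces (cone_chain x z) (insert x \<tau>)"
    then obtain \<sigma> where s: "s = insert x \<sigma>" "\<sigma> \<in> z" "x \<notin> \<sigma>" "\<tau> \<subseteq> insert x \<sigma>"
      "card (insert x \<sigma>) = Suc (card (insert x \<tau>))" by (auto simp: cofaces_def cone_chain_def)
    have "finite \<sigma>" using s(2) assms(2) by blast
    moreover have "\<tau> \<subseteq> \<sigma>" using s(4) assms(4) by blast
    ultimately have "\<sigma> \<in> without_x" using s assms(3,4) by (simp add: without_x_def cofaces_def)
    then show "s \<in> insert x ` without_x" using s(1) by blast
  next
    fix s assume "s \<in> insert x ` without_x"
    then obtain \<sigma> where s: "s = insert x \<sigma>" "\<sigma> \<in> without_x" by blast
    have "finite \<sigma>" using s(2) assms(2) by (auto simp: without_x_def cofaces_def)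
    then show "s \<in> cofaces (cone_chain x z) (insert x \<tau>)"
      using s assms(3,4) by (auto simp: without_x_def cofaces_def cone_chain_def)
  qed
  moreover have "inj_on (insert x) without_x"
    by (auto simp: without_x_def inj_on_def insert_ident)
  ultimately have card_cone: "card (cofaces (cone_chain x z) (insert x \<tau>)) = card without_x"
    by (simp add: card_image)
  have with_x: "{\<sigma>\<in>cofaces z \<tau>. x \<in> \<sigma>} = (if insert x \<tau> \<in> z then {insert x \<tau>} else {})"
  proof (intro equalityI subsetI)
    fix \<sigma> assume \<sigma>: "\<sigma> \<in> {\<sigma>\<in>cofaces z \<tau>. x \<in> \<sigma>}"
    then have "finite \<sigma>" "insert x \<tau> \<subseteq> \<sigma>" "card \<sigma> = card (insert x \<tau>)"
      using assms by (auto simp: cofaces_def)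
    then have "insert x \<tau> = \<sigma>" by (simp add: card_subset_eq)
    then show "\<sigma> \<in> (if insert x \<tau> \<in> z then {insert x \<tau>} else {})" using \<sigma> by (auto simp: cofaces_def)
  next
    fix \<sigma> assume "\<sigma> \<in> (if insert x \<tau> \<in> z then {insert x \<tau>} else {})"
    then show "\<sigma> \<in> {\<sigma>\<in>cofaces z \<tau>. x \<in> \<sigma>}"
      using assms(3,4) by (auto simp: cofaces_def split: if_splits)
  qed
  have "finite (cofaces z \<tau>)" using assms(1) by (simp add: cofaces_def)
  then have "card without_x + card {\<sigma>\<in>cofaces z \<tau>. x \<in> \<sigma>}
      = card (without_x \<union> {\<sigma>\<in>cofaces z \<tau>. x \<in> \<sigma>})"
    by (intro card_Un_disjoint[symmetric]) (auto simp: without_x_def)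
  also have "without_x \<union> {\<sigma>\<in>cofaces z \<tau>. x \<in> \<sigma>} = cofaces z \<tau>" by (auto simp: without_x_def)
  finally show ?thesis using card_cone with_x by (cases "insert x \<tau> \<in> z") simp_all
qed

lemma bdry_cone_chain:
  assumes "finite z" "\<forall>\<sigma>\<in>z. finite \<sigma>" "bdry z = {}"
  shows "bdry (cone_chain x z) = z"
proof -
  have "\<tau> \<in> bdry (cone_chain x z) \<longleftrightarrow> \<tau> \<in> z" if "finite \<tau>" for \<tau>
  proof (cases "x \<in> \<tau>")
    case False
    then show ?thesis using assms(2) by (simp add: mem_bdry_iff cofaces_cone_chain_apex_notin)
  next
    case True
    define \<tau>0 where "\<tau>0 = \<tau> - {x}"
    have \<tau>: "\<tau> = insert x \<tau>0" "x \<notin> \<tau>0" "finite \<tau>0" using True that by (auto simp: \<tau>0_def)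
    have "\<tau>0 \<notin> bdry z" using assms(3) by simp
    then have "even (card (cofaces z \<tau>0))" by (simp add: mem_bdry_iff)
    then show ?thesis
      using card_cofaces_cone_chain_apex_in[OF assms(1,2) \<tau>(3,2)] by (simp add: mem_bdry_iff \<tau>(1))
  qed
  moreover have "finite \<tau>" if \<tau>: "\<tau> \<in> bdry (cone_chain x z)" for \<tau>
  proof -
    obtain \<sigma> where "\<sigma> \<in> cone_chain x z" "\<tau> \<subseteq> \<sigma>" using \<tau> by (rule coface_if_mem_bdry)
    then show ?thesis using assms(2) by (auto simp: cone_chain_def intro: finite_subset)
  qed
  ultimately show ?thesis using assms(2) by blast
qed

definition downward_closed :: "'a set set \<Rightarrow> bool" where
  "downward_closed K \<longleftrightarrow> (\<forall>\<sigma>\<in>K. Pow \<sigma> \<subseteq> K)"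

definition cone_apex :: "'a set set \<Rightarrow> 'a \<Rightarrow> bool" where
  "cone_apex K x \<longleftrightarrow> (\<forall>\<sigma>\<in>K. insert x \<sigma> \<in> K)"

lemma finite_simplex:
  assumes "finite K" "downward_closed K" "\<sigma> \<in> K"
  shows "finite \<sigma>"
proof -
  have "Pow \<sigma> \<subseteq> K" using assms(2,3) by (simp add: downward_closed_def)
  then have "finite (Pow \<sigma>)" using assms(1) by (rule finite_subset)
  then show ?thesis by simp
qed

lemma bdry_in_chains:
  assumes "downward_closed K" "c \<in> chains K (Suc n)"
  shows "bdry c \<in> chains K n"
proof -
  have "\<tau> \<in> K \<and> card \<tau> = n" if \<tau>: "\<tau> \<in> bdry c" for \<tau>
  proof -
    obtain \<sigma> where "\<sigma> \<in> c" "\<tau> \<subseteq> \<sigma>" "card \<sigma> = Suc (card \<tau>)" using \<tau> by (rule coface_if_mem_bdry)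
    then show ?thesis using assms by (auto simp: chains_def downward_closed_def)
  qed
  then show ?thesis by (auto simp: chains_def)
qed

lemma cycles_eq_boundaries_if_cone_apex:
  assumes "finite K" "downward_closed K" "cone_apex K x"
  shows "cycles K n = boundaries K n"
proof (intro equalityI subsetI)
  fix z assume z: "z \<in> cycles K n"
  then have "z \<subseteq> K" "bdry z = {}" by (auto simp: cycles_def chains_def)
  moreover from this have "finite z" "\<forall>\<sigma>\<in>z. finite \<sigma>"
    using assms(1,2) finite_simplex finite_subset by blast+
  ultimately have "z = bdry (cone_chain x z)" by (simp add: bdry_cone_chain)
  moreover have "cone_chain x z \<in> chains K (Suc n)"
    using z assms(3) \<open>\<forall>\<sigma>\<in>z. finite \<sigma>\<close>
    by (auto simp: cycles_def chains_def cone_chain_def cone_apex_def)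
  ultimately show "z \<in> boundaries K n" by (simp add: boundaries_def)
next
  fix b assume "b \<in> boundaries K n"
  then obtain c where c: "c \<in> chains K (Suc n)" "b = bdry c" by (auto simp: boundaries_def)
  then have "c \<subseteq> K" by (auto simp: chains_def)
  then have "finite c" "\<forall>\<sigma>\<in>c. finite \<sigma>"
    using assms(1,2) finite_simplex finite_subset by blast+
  then have "bdry b = {}" using c(2) by (simp add: bdry_bdry)
  then show "b \<in> cycles K n" using bdry_in_chains[OF assms(2) c(1)] c(2) by (simp add: cycles_def)
qed

lemma reduced_betti_eq_0_if_cone_apex:
  assumes "finite K" "downward_closed K" "cone_apex K x"
  shows "reduced_betti K q = 0"
  using cycles_eq_boundaries_if_cone_apex[OF assms] by (simp add: reduced_betti_def)

lemma downward_closed_vietoris_rips: "downward_closed (vietoris_rips r X)"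
  by (auto simp: downward_closed_def vietoris_rips_def)

lemma finite_vietoris_rips: "finite X \<Longrightarrow> finite (vietoris_rips r X)"
  by (rule finite_subset[of _ "Pow X"]) (auto simp: vietoris_rips_def)

lemma mem_link_iff:
  assumes "downward_closed K"
  shows "\<tau> \<in> link K \<sigma> \<longleftrightarrow> \<tau> \<union> \<sigma> \<in> K \<and> \<tau> \<inter> \<sigma> = {}"
proof
  assume "\<tau> \<in> link K \<sigma>"
  then obtain \<upsilon> where "\<upsilon> \<in> K" "\<sigma> \<subseteq> \<upsilon>" "\<tau> \<subseteq> \<upsilon>" "\<tau> \<inter> \<sigma> = {}"
    by (auto simp: link_def star_def)
  moreover from this have "Pow \<upsilon> \<subseteq> K" using assms by (simp add: downward_closed_def)
  ultimately show "\<tau> \<union> \<sigma> \<in> K \<and> \<tau> \<inter> \<sigma> = {}" by blast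
next
  assume "\<tau> \<union> \<sigma> \<in> K \<and> \<tau> \<inter> \<sigma> = {}"
  then show "\<tau> \<in> link K \<sigma>" by (auto simp: link_def star_def)
qed

lemma link_subset:
  assumes "downward_closed K"
  shows "link K \<sigma> \<subseteq> K"
proof
  fix \<tau> assume "\<tau> \<in> link K \<sigma>"
  then have "\<tau> \<union> \<sigma> \<in> K" using assms by (simp add: mem_link_iff)
  then show "\<tau> \<in> K" using assms unfolding downward_closed_def by blast
qed

lemma downward_closed_link:
  assumes "downward_closed K"
  shows "downward_closed (link K \<sigma>)"
  unfolding downward_closed_def
proof (intro ballI subsetI)
  fix \<tau> \<tau>' assume "\<tau> \<in> link K \<sigma>" "\<tau>' \<in> Pow \<tau>"
  then have "\<tau> \<union> \<sigma> \<in> K" "\<tau>' \<union> \<sigma> \<in> Pow (\<tau> \<union> \<sigma>)" "\<tau>' \<inter> \<sigma> = {}"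
    using assms by (auto simp: mem_link_iff)
  moreover from this have "\<tau>' \<union> \<sigma> \<in> K" using assms unfolding downward_closed_def by blast
  ultimately show "\<tau>' \<in> link K \<sigma>" using assms by (simp add: mem_link_iff)
qed

lemma cone_apex_link_vietoris_rips:
  assumes "x \<in> X" "x \<notin> \<sigma>" "0 \<le> r"
    and near: "\<And>y. y \<in> X \<Longrightarrow> (\<forall>z\<in>\<sigma>. dist y z \<le> r) \<Longrightarrow> dist y x \<le> r"
  shows "cone_apex (link (vietoris_rips r X) \<sigma>) x"
  unfolding cone_apex_def
proof
  fix \<tau> assume "\<tau> \<in> link (vietoris_rips r X) \<sigma>"
  then have "\<tau> \<union> \<sigma> \<in> vietoris_rips r X" "\<tau> \<inter> \<sigma> = {}"
    by (simp_all add: mem_link_iff downward_closed_vietoris_rips)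
  then have \<tau>: "\<tau> \<union> \<sigma> \<subseteq> X" "\<forall>y\<in>\<tau> \<union> \<sigma>. \<forall>z\<in>\<tau> \<union> \<sigma>. dist y z \<le> r" "\<tau> \<inter> \<sigma> = {}"
    by (simp_all add: vietoris_rips_def)
  have "dist y x \<le> r" if "y \<in> \<tau> \<union> \<sigma>" for y
    using near \<tau>(1,2) that by blast
  then have "insert x \<tau> \<union> \<sigma> \<in> vietoris_rips r X"
    using \<tau>(1,2) assms(1,3) by (auto simp: vietoris_rips_def dist_commute)
  then show "insert x \<tau> \<in> link (vietoris_rips r X) \<sigma>"
    using \<tau>(3) assms(2) by (simp add: mem_link_iff downward_closed_vietoris_rips)
qed

lemma apollonius:
  fixes a b y :: "'a::real_inner"
  shows "4 * (dist y (midpoint a b))\<^sup>2 = 2 * (dist y a)\<^sup>2 + 2 * (dist y b)\<^sup>2 - (dist a b)\<^sup>2"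
proof -
  define u v where "u = y - a" and "v = y - b"
  have "u + v = 2 *\<^sub>R (y - midpoint a b)"
    by (simp add: u_def v_def midpoint_def algebra_simps scaleR_2)
  then have "norm (u + v) = 2 * dist y (midpoint a b)" by (simp add: dist_norm)
  then have "4 * (dist y (midpoint a b))\<^sup>2 = (norm (u + v))\<^sup>2" by (simp add: power_mult_distrib)
  also have "\<dots> = 2 * (norm u)\<^sup>2 + 2 * (norm v)\<^sup>2 - (norm (v - u))\<^sup>2"
    by (simp add: power2_norm_eq_inner inner_add_left inner_add_right inner_diff_left
        inner_diff_right inner_commute)
  also have "v - u = a - b" by (simp add: u_def v_def)
  finally show ?thesis by (simp add: u_def v_def dist_norm)
qed

lemma dist_midpoint_le_if_dist_le:
  fixes a b y :: "'a::real_inner"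
  assumes "dist y a \<le> dist a b" "dist y b \<le> dist a b"
  shows "dist y (midpoint a b) \<le> sqrt 3 / 2 * dist a b"
proof -
  have "(dist y a)\<^sup>2 \<le> (dist a b)\<^sup>2" "(dist y b)\<^sup>2 \<le> (dist a b)\<^sup>2"
    using power_mono[OF assms(1) zero_le_dist] power_mono[OF assms(2) zero_le_dist] by blast+
  then have "4 * (dist y (midpoint a b))\<^sup>2 \<le> 3 * (dist a b)\<^sup>2"
    using apollonius[of y a b] by linarith
  then have "(2 * dist y (midpoint a b))\<^sup>2 \<le> (sqrt 3 * dist a b)\<^sup>2"
    by (simp add: power_mult_distrib)
  then have "2 * dist y (midpoint a b) \<le> sqrt 3 * dist a b" by (rule power2_le_imp_le) simp
  then show ?thesis by simp
qed

lemma dist_le_if_near_midpoint: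
  fixes a b x y :: "'a::real_inner"
  assumes "dist x (midpoint a b) \<le> (1 - sqrt 3 / 2) * dist a b"
    and "dist y a \<le> dist a b" "dist y b \<le> dist a b"
  shows "dist y x \<le> dist a b"
  using dist_triangle[of y x "midpoint a b"] dist_midpoint_le_if_dist_le[OF assms(2,3)] assms(1)
  by (simp add: dist_commute algebra_simps)

theorem lemmaC1:
  fixes X :: "'a::euclidean_space set" and x1 x2 :: 'a
  assumes "finite X" and "x1 \<in> X" and "x2 \<in> X" and "x1 \<noteq> x2"
    and "critical_edge X {x1, x2} (dist x1 x2)"
  shows "\<forall>x\<in>X. x \<notin> cball (scaleR (1/2) (x1 + x2)) ((1 - sqrt 3 / 2) * dist x1 x2)"
proof (intro ballI notI)
  fix x assume "x \<in> X" "x \<in> cball (scaleR (1/2) (x1 + x2)) ((1 - sqrt 3 / 2) * dist x1 x2)"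
  then have near: "dist x (midpoint x1 x2) \<le> (1 - sqrt 3 / 2) * dist x1 x2"
    by (simp add: midpoint_def dist_commute inverse_eq_divide)
  have "(1 - sqrt 3 / 2) * dist x1 x2 < dist x1 x2 / 2"
    using \<open>x1 \<noteq> x2\<close> by (simp add: field_simps real_less_rsqrt)
  then have "x \<notin> {x1, x2}" using near by (auto simp: dist_midpoint)
  define L where "L = link (vietoris_rips (dist x1 x2) X) {x1, x2}"
  have "cone_apex L x"
    unfolding L_def using \<open>x \<in> X\<close> \<open>x \<notin> {x1, x2}\<close>
    by (rule cone_apex_link_vietoris_rips) (auto intro: dist_le_if_near_midpoint[OF near])
  moreover have "downward_closed L"
    unfolding L_def by (intro downward_closed_link downward_closed_vietoris_rips)
  moreover have "finite L"
    unfolding L_def by (rule finite_subset[OF link_subset finite_vietoris_rips])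
      (use downward_closed_vietoris_rips \<open>finite X\<close> in auto)
  ultimately have "reduced_betti L q = 0" for q by (simp add: reduced_betti_eq_0_if_cone_apex)
  moreover have "{x1, x2} \<in> vietoris_rips (dist x1 x2) X"
    using assms(2,3) by (auto simp: vietoris_rips_def dist_commute)
  then have "{} \<in> L" by (simp add: L_def mem_link_iff downward_closed_vietoris_rips)
  then have "{x} \<in> L" using \<open>cone_apex L x\<close> by (auto simp: cone_apex_def)
  ultimately show False using assms(5) by (auto simp: critical_edge_def L_def)
qed

end
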